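(* For every $b'>b>0$ and $a>0$, one has $$\mathbf{B}'_{a,b}\;\stackrel{d}{=}\;\mathbf{B}'_{a,b'}\times\left(1+\mathbf{B}'_{b'-b,b}\right),$$ where the two random variables on the right-hand side are independent.
   Context: For $p,q>0$, $\mathbf{B}'_{p,q}$ denotes a beta prime random variable with density $\frac{\Gamma(p+q)}{\Gamma(p)\Gamma(q)}\frac{x^{p-1}}{(1+x)^{p+q}}$ on $(0,\infty)$. $\stackrel{d}{=}$ denotes equality in distribution. *)

theory Defs
  imports "HOL-Probability.Probability"
begin

definition beta_prime_density :: "real \<Rightarrow> real \<Rightarrow> real \<Rightarrow> real" where
  "beta_prime_density p q x =
     (if x > 0 then Gamma (p + q) / (Gamma p * Gamma q) * x powr (p - 1) / (1 + x) powr (p + q)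
      else 0)"

end

theory Submission
  imports Defs
begin

(* By independence, X * W with W = 1 + Y > 0 has the multiplicative convolution density
   z \<mapsto> \<integral> f\<^sub>X (z / w) f\<^sub>W w / w dw.  For beta prime densities the integrand is, up to
   the constant z^(a-1) / (B(a, b') B(b' - b, b)), the kernel (w - 1)^(b'-b-1) / (z + w)^(a+b'),
   whose integral is (1 + z)^(-(a+b)) B(b' - b, a + b): write 1 / (k + y)^s as a Gamma integral
   and apply Fubini.  The identity B(a, b') B(b' - b, b) = B(a, b) B(b' - b, a + b) leaves exactly
   the beta prime density with parameters a, b. *)

lemma nn_integral_lborel_scale:
  fixes h :: "real \<Rightarrow> ennreal" and c :: real
  assumes [measurable]: "h \<in> borel_measurable borel" and c: "0 < c"
  shows "(\<integral>\<^sup>+x. h (x * c) \<partial>lborel) = (\<integral>\<^sup>+z. h z / ennreal c \<partial>lborel)"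
proof -
  have "(\<integral>\<^sup>+z. h z / ennreal c \<partial>lborel) = ennreal c * (\<integral>\<^sup>+x. h (c * x) / ennreal c \<partial>lborel)"
    using nn_integral_real_affine[of "\<lambda>z. h z / ennreal c" c 0] c by simp
  also have "\<dots> = ennreal c * (\<integral>\<^sup>+x. h (x * c) \<partial>lborel) / ennreal c"
    by (simp add: nn_integral_divide ennreal_times_divide mult.commute)
  also have "\<dots> = (\<integral>\<^sup>+x. h (x * c) \<partial>lborel)"
    using c by (metis ennreal_eq_0_iff ennreal_neq_top mult.commute mult_divide_eq_ennreal not_le)
  finally show ?thesis ..
qed

lemma (in prob_space) distributed_mult_convolution:
  fixes f g :: "real \<Rightarrow> ennreal"
  assumes indep: "indep_var borel X borel W"
    and X: "distributed M lborel X f" and W: "distributed M lborel W g"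
    and g_nonpos: "\<And>w. w \<le> 0 \<Longrightarrow> g w = 0"
  shows "distributed M lborel (\<lambda>\<omega>. X \<omega> * W \<omega>) (\<lambda>z. \<integral>\<^sup>+w. f (z / w) * g w / ennreal w \<partial>lborel)"
    (is "distributed M lborel ?Z ?h")
  unfolding distributed_def
proof safe
  have [measurable]: "f \<in> borel_measurable borel" "g \<in> borel_measurable borel"
    "X \<in> borel_measurable M" "W \<in> borel_measurable M"
    using X W by (simp_all add: distributed_def)
  show "?h \<in> borel_measurable lborel" by measurable
  show "random_variable lborel ?Z" by measurable
  have "indep_var lborel X lborel W"
    using indep by (simp add: indep_var_def indep_vars_def bool.case_eq_if)
  then have joint: "distributed M (lborel \<Otimes>\<^sub>M lborel) (\<lambda>\<omega>. (X \<omega>, W \<omega>)) (\<lambda>(x, w). f x * g w)"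
    using X W by (intro distributed_joint_indep) (simp_all add: lborel.sigma_finite_measure_axioms)
  show "distr M lborel ?Z = density lborel ?h"
  proof (rule measure_eqI)
    fix A assume "A \<in> sets (distr M lborel ?Z)"
    then have [measurable]: "A \<in> sets borel" by simp
    have slice: "(\<integral>\<^sup>+x. f x * g w * indicator A (x * w) \<partial>lborel)
        = (\<integral>\<^sup>+z. f (z / w) * g w / ennreal w * indicator A z \<partial>lborel)" for w
    proof (cases "0 < w")
      case True
      then show ?thesis
        using nn_integral_lborel_scale[of "\<lambda>z. f (z / w) * g w * indicator A z" w]
        by (simp add: ennreal_times_divide mult_ac)
    qed (simp add: g_nonpos)
    have "emeasure (distr M lborel ?Z) A = (\<integral>\<^sup>+z. indicator A z \<partial>distr M lborel ?Z)"
      by (rule nn_integral_indicator[symmetric]) simp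
    also have "\<dots> = (\<integral>\<^sup>+\<omega>. indicator A (X \<omega> * W \<omega>) \<partial>M)"
      by (rule nn_integral_distr) measurable
    also have "\<dots> = (\<integral>\<^sup>+p. (\<lambda>(x, w). f x * g w) p * (\<lambda>(x, w). indicator A (x * w)) p \<partial>(lborel \<Otimes>\<^sub>M lborel))"
      by (subst distributed_nn_integral[OF joint]) auto
    also have "\<dots> = (\<integral>\<^sup>+w. \<integral>\<^sup>+x. f x * g w * indicator A (x * w) \<partial>lborel \<partial>lborel)"
      by (subst lborel_pair.nn_integral_snd[symmetric]) (auto simp: case_prod_beta)
    also have "\<dots> = (\<integral>\<^sup>+w. \<integral>\<^sup>+z. f (z / w) * g w / ennreal w * indicator A z \<partial>lborel \<partial>lborel)"
      by (simp add: slice)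
    also have "\<dots> = (\<integral>\<^sup>+z. \<integral>\<^sup>+w. f (z / w) * g w / ennreal w * indicator A z \<partial>lborel \<partial>lborel)"
      by (rule lborel_pair.Fubini') measurable
    also have "\<dots> = emeasure (density lborel ?h) A"
      by (simp add: emeasure_density nn_integral_multc)
    finally show "emeasure (distr M lborel ?Z) A = emeasure (density lborel ?h) A" .
  qed simp
qed

lemma nn_integral_powr_exp:
  fixes l p :: real
  assumes l: "0 < l" and p: "0 < p"
  shows "(\<integral>\<^sup>+t. ennreal (indicator {0<..} t * t powr (p - 1) * exp (- (l * t))) \<partial>lborel)
    = ennreal (Gamma p / l powr p)"
    (is "?I = _")
proof -
  have Gamma_integrand: "indicator {0..} t * t powr (p - 1) / exp t = indicator {0<..} t * t powr (p - 1) * exp (- t)"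
    for t :: real
    by (cases "t = 0") (auto simp: indicator_def exp_minus divide_inverse)
  have "ennreal (Gamma p) = (\<integral>\<^sup>+t. ennreal (indicator {0<..} t * t powr (p - 1) * exp (- t)) \<partial>lborel)"
    unfolding Gamma_conv_nn_integral_real[OF p] Gamma_integrand ..
  also have "\<dots> = ennreal l * (\<integral>\<^sup>+x. ennreal (indicator {0<..} (l * x) * (l * x) powr (p - 1) * exp (- (l * x))) \<partial>lborel)"
    using nn_integral_real_affine[of "\<lambda>t. ennreal (indicator {0<..} t * t powr (p - 1) * exp (- t))" l 0] l
    by simp
  also have "(\<integral>\<^sup>+x. ennreal (indicator {0<..} (l * x) * (l * x) powr (p - 1) * exp (- (l * x))) \<partial>lborel)
      = (\<integral>\<^sup>+x. ennreal (l powr (p - 1)) * ennreal (indicator {0<..} x * x powr (p - 1) * exp (- (l * x))) \<partial>lborel)"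
    using l by (intro nn_integral_cong) (simp add: indicator_def zero_less_mult_iff powr_mult ennreal_mult'[symmetric])
  also have "\<dots> = ennreal (l powr (p - 1)) * ?I"
    by (rule nn_integral_cmult) simp
  finally have "ennreal (Gamma p) = (ennreal l * ennreal (l powr (p - 1))) * ?I"
    by (simp only: mult.assoc)
  also have "ennreal l * ennreal (l powr (p - 1)) = ennreal (l powr p)"
    using l by (simp add: ennreal_mult[symmetric] powr_mult_base)
  finally have "ennreal (Gamma p) / ennreal (l powr p) = ?I"
    using l by (simp add: mult.commute[of _ ?I] mult_divide_eq_ennreal)
  then show ?thesis
    using l p by (simp add: divide_ennreal Gamma_real_pos less_imp_le)
qed

lemma nn_integral_beta_prime_kernel:
  fixes k c s :: real
  assumes k: "0 < k" and c: "0 < c" and cs: "c < s"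
  shows "(\<integral>\<^sup>+y. ennreal (indicator {0<..} y * y powr (c - 1) / (k + y) powr s) \<partial>lborel)
    = ennreal (k powr (c - s) * Beta c (s - c))"
proof -
  have s: "0 < s" and Gamma_s: "0 < Gamma s"
    using c cs by (simp_all add: Gamma_real_pos)
  define H where "H y u = ennreal (indicator {0<..} y * y powr (c - 1) / Gamma s) *
      ennreal (indicator {0<..} u * u powr (s - 1) * exp (- ((k + y) * u)))" for y u :: real
  have [measurable]: "(\<lambda>(y, u). H y u) \<in> borel_measurable (lborel \<Otimes>\<^sub>M lborel)"
    unfolding H_def by measurable
  have inner_u: "(\<integral>\<^sup>+u. H y u \<partial>lborel) = ennreal (indicator {0<..} y * y powr (c - 1) / (k + y) powr s)"
    for y
  proof (cases "0 < y")
    case True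
    have "(\<integral>\<^sup>+u. H y u \<partial>lborel) = ennreal (y powr (c - 1) / Gamma s) *
        (\<integral>\<^sup>+u. ennreal (indicator {0<..} u * u powr (s - 1) * exp (- ((k + y) * u))) \<partial>lborel)"
      unfolding H_def using True by (simp add: nn_integral_cmult)
    also have "\<dots> = ennreal (y powr (c - 1) / Gamma s) * ennreal (Gamma s / (k + y) powr s)"
      using True k s by (simp add: nn_integral_powr_exp)
    finally show ?thesis
      using True Gamma_s by (simp add: ennreal_mult'[symmetric])
  qed (simp add: H_def)
  have inner_y: "(\<integral>\<^sup>+y. H y u \<partial>lborel) = ennreal (Gamma c / Gamma s) *
      ennreal (indicator {0<..} u * u powr (s - c - 1) * exp (- (k * u)))" for u
  proof (cases "0 < u")
    case True
    have "(\<integral>\<^sup>+y. H y u \<partial>lborel) = ennreal (u powr (s - 1) * exp (- (k * u)) / Gamma s) *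
        (\<integral>\<^sup>+y. ennreal (indicator {0<..} y * y powr (c - 1) * exp (- (u * y))) \<partial>lborel)"
      unfolding H_def using True Gamma_s
      by (subst nn_integral_cmult[symmetric], simp, intro nn_integral_cong)
         (simp add: ennreal_mult'[symmetric] indicator_def distrib_right mult_exp_exp algebra_simps)
    also have "\<dots> = ennreal (u powr (s - 1) * exp (- (k * u)) / Gamma s) * ennreal (Gamma c / u powr c)"
      using True c by (simp add: nn_integral_powr_exp)
    finally show ?thesis
      using True Gamma_s c
      by (simp add: ennreal_mult'[symmetric] Gamma_real_pos powr_diff powr_mult_base field_simps)
  qed (simp add: H_def)
  have "(\<integral>\<^sup>+y. ennreal (indicator {0<..} y * y powr (c - 1) / (k + y) powr s) \<partial>lborel)
      = (\<integral>\<^sup>+y. \<integral>\<^sup>+u. H y u \<partial>lborel \<partial>lborel)"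
    by (simp add: inner_u)
  also have "\<dots> = (\<integral>\<^sup>+u. \<integral>\<^sup>+y. H y u \<partial>lborel \<partial>lborel)"
    by (rule lborel_pair.Fubini') simp
  also have "\<dots> = ennreal (Gamma c / Gamma s) *
      (\<integral>\<^sup>+u. ennreal (indicator {0<..} u * u powr (s - c - 1) * exp (- (k * u))) \<partial>lborel)"
    by (simp add: inner_y nn_integral_cmult)
  also have "\<dots> = ennreal (Gamma c / Gamma s) * ennreal (Gamma (s - c) / k powr (s - c))"
    using k cs by (simp add: nn_integral_powr_exp)
  also have "\<dots> = ennreal (k powr (c - s) * Beta c (s - c))"
    using Gamma_s c cs k
    by (simp add: ennreal_mult'[symmetric] Beta_def Gamma_real_pos powr_diff field_simps)
  finally show ?thesis .
qed

(* No positivity hypotheses: where a Gamma value is 0 (at a pole), both sides vanish since x / 0 = 0. *)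
lemma beta_prime_density_Beta:
  "beta_prime_density p q x = (if 0 < x then x powr (p - 1) / (1 + x) powr (p + q) / Beta p q else 0)"
  by (simp add: beta_prime_density_def Beta_def divide_inverse mult_ac)

lemma beta_prime_density_nonneg: "0 < p \<Longrightarrow> 0 < q \<Longrightarrow> 0 \<le> beta_prime_density p q x"
  by (simp add: beta_prime_density_Beta Beta_def Gamma_real_pos)

lemma beta_prime_density_nonpos: "x \<le> 0 \<Longrightarrow> beta_prime_density p q x = 0"
  by (simp add: beta_prime_density_def)

lemma Beta_mult_Beta_add:
  fixes a b c :: real
  assumes "0 < a" "0 < b" "0 < c"
  shows "Beta a (b + c) * Beta c b = Beta a b * Beta c (a + b)"
proof -
  have "Gamma (a + b) \<noteq> 0" "Gamma (b + c) \<noteq> 0"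
    using assms by (simp_all add: Gamma_real_pos less_imp_neq[symmetric])
  with assms show ?thesis
    by (simp add: Beta_def Gamma_real_pos field_simps ac_simps)
qed

lemma beta_prime_mult_convolution_integrand:
  fixes a b c z w :: real
  assumes a: "0 < a" and b: "0 < b" and c: "0 < c" and z: "0 < z"
  shows "ennreal (beta_prime_density a (b + c) (z / w)) * ennreal (beta_prime_density c b (w - 1)) / ennreal w
    = ennreal (z powr (a - 1) / (Beta a (b + c) * Beta c b)) *
      ennreal (indicator {0<..} (w - 1) * (w - 1) powr (c - 1) / ((1 + z) + (w - 1)) powr (a + b + c))"
proof (cases "1 < w")
  case True
  have "w powr (a + b + c) = w powr ((a - 1) + (c + b) + 1)"
    by (simp add: algebra_simps)
  also have "\<dots> = w powr (a - 1) * w powr (c + b) * w"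
    using True by (simp only: powr_add powr_one)
  finally have "w powr (a + b + c) = w powr (a - 1) * w powr (c + b) * w" .
  moreover have "1 + z / w = (z + w) / w"
    using True by (simp add: field_simps)
  ultimately have "beta_prime_density a (b + c) (z / w) * beta_prime_density c b (w - 1) / w
      = z powr (a - 1) / (Beta a (b + c) * Beta c b) * ((w - 1) powr (c - 1) / (z + w) powr (a + b + c))"
    using z True by (simp add: beta_prime_density_Beta powr_divide field_simps)
  moreover have "0 < Beta a (b + c) * Beta c b"
    using a b c by (simp add: Beta_def Gamma_real_pos)
  ultimately show ?thesis
    using a b c z True
    by (simp add: ennreal_mult'[symmetric] divide_ennreal beta_prime_density_nonneg)
qed (simp add: beta_prime_density_nonpos)

lemma beta_prime_density_mult_convolution:
  fixes a b c z :: real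
  assumes a: "0 < a" and b: "0 < b" and c: "0 < c"
  shows "(\<integral>\<^sup>+w. ennreal (beta_prime_density a (b + c) (z / w)) *
      ennreal (beta_prime_density c b (w - 1)) / ennreal w \<partial>lborel) = ennreal (beta_prime_density a b z)"
proof (cases "0 < z")
  case False
  have vanishes: "ennreal (beta_prime_density a (b + c) (z / w)) * ennreal (beta_prime_density c b (w - 1)) / ennreal w = 0"
    for w
    using False by (cases "1 < w") (simp_all add: beta_prime_density_nonpos divide_nonpos_pos)
  show ?thesis
    unfolding vanishes using False by (simp add: beta_prime_density_nonpos)
next
  case True
  define B where "B = Beta a (b + c) * Beta c b"
  have B: "B = Beta a b * Beta c (a + b)" "0 < B"
    using a b c unfolding B_def by (simp add: Beta_mult_Beta_add, simp add: Beta_def Gamma_real_pos)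
  define h where "h y = ennreal (indicator {0<..} y * y powr (c - 1) / ((1 + z) + y) powr (a + b + c))" for y
  have [measurable]: "h \<in> borel_measurable borel"
    unfolding h_def by measurable
  have "(\<integral>\<^sup>+w. ennreal (beta_prime_density a (b + c) (z / w)) *
      ennreal (beta_prime_density c b (w - 1)) / ennreal w \<partial>lborel)
      = ennreal (z powr (a - 1) / B) * (\<integral>\<^sup>+w. h (w - 1) \<partial>lborel)"
    using a b c True
    by (simp add: beta_prime_mult_convolution_integrand B_def h_def nn_integral_cmult)
  also have "(\<integral>\<^sup>+w. h (w - 1) \<partial>lborel) = (\<integral>\<^sup>+y. h y \<partial>lborel)"
    using nn_integral_real_affine[of "\<lambda>w. h (w - 1)" 1 1] by simp
  also have "\<dots> = ennreal ((1 + z) powr (c - (a + b + c)) * Beta c (a + b + c - c))"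
    unfolding h_def using True a b c by (intro nn_integral_beta_prime_kernel) simp_all
  also have "ennreal (z powr (a - 1) / B) * \<dots> = ennreal (beta_prime_density a b z)"
  proof -
    have "(1 + z) powr (c - (a + b + c)) = 1 / (1 + z) powr (a + b)"
      using powr_minus_divide[of "1 + z" "a + b"] by simp
    moreover have "Beta c (a + b) \<noteq> 0"
      using B by auto
    ultimately have "z powr (a - 1) / B * ((1 + z) powr (c - (a + b + c)) * Beta c (a + b + c - c))
        = beta_prime_density a b z"
      using True B by (simp add: beta_prime_density_Beta)
    then show ?thesis
      using True B by (simp add: ennreal_mult'[symmetric])
  qed
  finally show ?thesis .
qed

theorem proposition1:
  fixes M :: "'s measure" and X Y :: "'s \<Rightarrow> real" and a b b' :: real
  assumes "prob_space M"
    and "0 < b" and "b < b'" and "0 < a"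
    and "distributed M lborel X (\<lambda>x. ennreal (beta_prime_density a b' x))"
    and "distributed M lborel Y (\<lambda>y. ennreal (beta_prime_density (b' - b) b y))"
    and "prob_space.indep_var M borel X borel Y"
  shows "distributed M lborel (\<lambda>\<omega>. X \<omega> * (1 + Y \<omega>)) (\<lambda>z. ennreal (beta_prime_density a b z))"
proof -
  interpret prob_space M by fact
  have W: "distributed M lborel (\<lambda>\<omega>. 1 + Y \<omega>) (\<lambda>w. ennreal (beta_prime_density (b' - b) b (w - 1)))"
    using distributed_affine[OF assms(6), of 1 1] by (simp add: divide_ennreal_def)
  have "indep_var borel X borel (\<lambda>\<omega>. 1 + Y \<omega>)"
    using indep_var_compose[OF assms(7), of id borel "\<lambda>y. 1 + y" borel] by (simp add: comp_def)
  then have "distributed M lborel (\<lambda>\<omega>. X \<omega> * (1 + Y \<omega>))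
      (\<lambda>z. \<integral>\<^sup>+w. ennreal (beta_prime_density a b' (z / w)) *
        ennreal (beta_prime_density (b' - b) b (w - 1)) / ennreal w \<partial>lborel)"
    using assms(5) W by (rule distributed_mult_convolution) (simp add: beta_prime_density_nonpos)
  also have "(\<lambda>z. \<integral>\<^sup>+w. ennreal (beta_prime_density a b' (z / w)) *
        ennreal (beta_prime_density (b' - b) b (w - 1)) / ennreal w \<partial>lborel)
      = (\<lambda>z. ennreal (beta_prime_density a b z))"
    using beta_prime_density_mult_convolution[of a b "b' - b"] assms(2-4) by simp
  finally show ?thesis .
qed

end
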